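(* In the two-period scalar linear structural model described in the context, satisfying (A1)–(A5), additionally matching on the pre-treatment outcome always (weakly) reduces the first-order variance relative to matching only on the observed covariate: $\mathrm{Var}(\hat\tau^{X}_{\mathrm{DiD}})\ge\mathrm{Var}(\hat\tau^{X,Y_0}_{\mathrm{DiD}})$.
   Context: Setting: $n$ units $i=1,\dots,n$; binary treatment indicator $Z_i\in\{0,1\}$; two periods $t=0$ (pre-treatment) and $t=1$ (post-treatment; treatment is received only at $t=1$). Let $n_1=\sum_i Z_i$, $n_0=n-n_1$, with $n_0\ge n_1\ge 1$. Each unit has a time-invariant latent variable $\theta_i\in\mathbb{R}$ and observed covariate $X_i\in\mathbb{R}$. Potential outcomes: $Y_{i,t}(0)=\beta_{0,t}+\beta_{\theta,t}\theta_i+\beta_{x,t}X_i+\epsilon_{i,t}$, $Y_{i,t}(1)=Y_{i,t}(0)+\tau\,\mathbf{1}(t=1)$, with fixed constants; observed $Y_{i,t}=Z_iY_{i,t}(1)+(1-Z_i)Y_{i,t}(0)$. Assumptions: (A1) $(Y_{i,0},Y_{i,1},Z_i,\theta_i,X_i)$ i.i.d. across $i$. (A2) $\epsilon_{i,t}$ independent of $(\theta_i,X_i,Z_i)$, mean $0$, variance $\sigma_E^2>0$, independent across $t$, finite fourth moment. (A3) $\mathbb{E}[\theta_i\mid Z_i=z]=\mu_{\theta,z}$, $\mathbb{E}[X_i\mid Z_i=z]=\mu_{x,z}$; $\mathrm{Var}(\theta_i\mid Z_i=z)=\sigma_\theta^2>0$, $\mathrm{Var}(X_i\mid Z_i=z)=\sigma_x^2>0$,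 $\mathrm{Cov}(\theta_i,X_i\mid Z_i=z)=\rho\sigma_\theta\sigma_x$, independent of $z$; finite fourth moments of $\theta_i,X_i$. (A4) $n_1/n\to p\in(0,1/2]$ in probability, $p=\mathbb{P}(Z_i=1)$. (A5) Matching on $W_i$: an injective map $\mathcal{M}$ from treated units to control units with image $\mathcal{C}'$ of size $n_1$, with $\frac1{n_1}\sum_{i\text{ treated}}\|W_{\mathcal{M}(i)}-W_i\|_2=o_p(n^{-1/2})$ and $\frac1{n_1}\sum_{i\text{ treated}}\|W_{\mathcal{M}(i)}-W_i\|_2^2=o_p(n^{-1})$; $M_i=\mathbf{1}(i\in\mathcal{C}')$. Estimators: $\hat\tau^{X}_{\mathrm{DiD}}=\frac1{n_1}\sum_i(Y_{i,1}-Y_{i,0})Z_i-\frac1{n_1}\sum_i(Y_{i,1}-Y_{i,0})M_i$ with matching on $W_i=X_i$; $\hat\tau^{X,Y_0}_{\mathrm{DiD}}=\frac1{n_1}\sum_iY_{i,1}Z_i-\frac1{n_1}\sum_iY_{i,1}M_i$ with matching on $W_i=(X_i,Y_{i,0})$. Convention: variances are first-order: "$\mathrm{Var}(\hat\tau)=V$" means $\mathrm{Var}(\hat\tau)=V+o_p(n^{-1})$ with the realized $n_1$ treated as given; comparisons of variances are comparisons of these leading-order expressions. *)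

theory Defs
  imports Complex_Main
begin

text \<open>Within-group (Z = z) second moments implied by the model and (A2),(A3); they do
not depend on z. Parameters: slopes bth0 bth1 (on theta), bx0 bx1 (on X) in periods 0,1;
sd_th, sd_x the standard deviations of theta and X, rho their correlation, s2E the
noise variance.\<close>

definition var_th :: "real \<Rightarrow> real" where "var_th sd_th = sd_th^2"
definition var_x :: "real \<Rightarrow> real" where "var_x sd_x = sd_x^2"
definition cov_thx :: "real \<Rightarrow> real \<Rightarrow> real \<Rightarrow> real" where
  "cov_thx rho sd_th sd_x = rho * sd_th * sd_x"

definition var_lin :: "real \<Rightarrow> real \<Rightarrow> real \<Rightarrow> real \<Rightarrow> real \<Rightarrow> real \<Rightarrow> real" where
  "var_lin bth bx rho sd_th sd_x nv =
     bth^2 * var_th sd_th + bx^2 * var_x sd_x + 2 * bth * bx * cov_thx rho sd_th sd_x + nv"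

definition cov_lin_x :: "real \<Rightarrow> real \<Rightarrow> real \<Rightarrow> real \<Rightarrow> real \<Rightarrow> real" where
  "cov_lin_x bth bx rho sd_th sd_x = bth * cov_thx rho sd_th sd_x + bx * var_x sd_x"

definition cov_lin_lin :: "real \<Rightarrow> real \<Rightarrow> real \<Rightarrow> real \<Rightarrow> real \<Rightarrow> real \<Rightarrow> real \<Rightarrow> real" where
  "cov_lin_lin a1 a2 b1 b2 rho sd_th sd_x =
     a1 * b1 * var_th sd_th + a2 * b2 * var_x sd_x + (a1 * b2 + a2 * b1) * cov_thx rho sd_th sd_x"

text \<open>Residual variance of an outcome after linear projection on one / two matching variables
(Schur complement).\<close>
definition resid1 :: "real \<Rightarrow> real \<Rightarrow> real \<Rightarrow> real" where
  "resid1 v c w = v - c^2 / w"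

definition resid2 :: "real \<Rightarrow> real \<Rightarrow> real \<Rightarrow> real \<Rightarrow> real \<Rightarrow> real \<Rightarrow> real" where
  "resid2 v c1 c2 w11 w12 w22 =
     v - (c1^2 * w22 - 2 * c1 * c2 * w12 + c2^2 * w11) / (w11 * w22 - w12^2)"

text \<open>First-order variance of a matched mean-difference estimator with n1 treated and n1
matched controls: each group contributes (residual variance)/n1.\<close>
definition fo_var :: "nat \<Rightarrow> real \<Rightarrow> real" where
  "fo_var n1 r = 2 * r / real n1"

text \<open>tau_DiD^X: outcome Y1 - Y0, matched on X.\<close>
definition var_DiD_X ::
  "nat \<Rightarrow> real \<Rightarrow> real \<Rightarrow> real \<Rightarrow> real \<Rightarrow> real \<Rightarrow> real \<Rightarrow> real \<Rightarrow> real \<Rightarrow> real" where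
  "var_DiD_X n1 bth0 bth1 bx0 bx1 rho sd_th sd_x s2E =
     fo_var n1 (resid1 (var_lin (bth1 - bth0) (bx1 - bx0) rho sd_th sd_x (2 * s2E))
                       (cov_lin_x (bth1 - bth0) (bx1 - bx0) rho sd_th sd_x)
                       (var_x sd_x))"

text \<open>tau_DiD^{X,Y0}: outcome Y1, matched on (X, Y0).\<close>
definition var_DiD_XY0 ::
  "nat \<Rightarrow> real \<Rightarrow> real \<Rightarrow> real \<Rightarrow> real \<Rightarrow> real \<Rightarrow> real \<Rightarrow> real \<Rightarrow> real \<Rightarrow> real" where
  "var_DiD_XY0 n1 bth0 bth1 bx0 bx1 rho sd_th sd_x s2E =
     fo_var n1 (resid2 (var_lin bth1 bx1 rho sd_th sd_x s2E)
                       (cov_lin_x bth1 bx1 rho sd_th sd_x)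
                       (cov_lin_lin bth1 bx1 bth0 bx0 rho sd_th sd_x)
                       (var_x sd_x)
                       (cov_lin_x bth0 bx0 rho sd_th sd_x)
                       (var_lin bth0 bx0 rho sd_th sd_x s2E))"

end

theory Submission
  imports Defs
begin

text \<open>Within each treatment group the model is linear, so both first-order variances are
residual variances of linear projections. Projecting out X leaves the latent part
\<open>U = \<theta> - E[\<theta> | X]\<close> of variance \<open>\<sigma>\<^sub>\<theta>\<^sup>2(1 - \<rho>\<^sup>2)\<close>, and
\<open>Y\<^sub>t\<close> reduces to \<open>\<beta>\<^sub>\<theta>\<^sub>,\<^sub>t U + \<epsilon>\<^sub>t\<close>.
Matching on \<open>(X, Y\<^sub>0)\<close> then amounts to regressing the reduced \<open>Y\<^sub>1\<close> on the reduced
\<open>Y\<^sub>0\<close> with the optimal coefficient, while differencing fixes that coefficient at 1;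
the optimal linear predictor cannot do worse.\<close>

lemma resid1_le_quadratic:
  fixes v c w k :: real
  assumes "w > 0"
  shows "resid1 v c w \<le> v - 2 * k * c + k^2 * w"
proof -
  have "v - 2 * k * c + k^2 * w - resid1 v c w = (k * w - c)^2 / w"
    using assms by (simp add: resid1_def field_simps power2_eq_square)
  also have "\<dots> \<ge> 0"
    using assms by simp
  finally show ?thesis
    by simp
qed

text \<open>Frisch-Waugh: projecting on two variables is projecting on the first, then on the
residual of the second.\<close>

lemma resid2_as_iterated_resid1:
  fixes v c1 c2 w11 w12 w22 :: real
  assumes "w11 \<noteq> 0" and "resid1 w22 w12 w11 \<noteq> 0"
  shows "resid2 v c1 c2 w11 w12 w22
    = resid1 (resid1 v c1 w11) (c2 - c1 * w12 / w11) (resid1 w22 w12 w11)"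
proof -
  have det: "w11 * w22 - w12^2 = w11 * resid1 w22 w12 w11"
    using assms(1) by (simp add: resid1_def field_simps)
  show ?thesis
    using assms unfolding resid2_def det
    by (simp add: resid1_def field_simps power2_eq_square)
qed

definition var_th_given_x :: "real \<Rightarrow> real \<Rightarrow> real" where
  "var_th_given_x rho sd_th = sd_th^2 * (1 - rho^2)"

lemma var_th_given_x_nonneg:
  assumes "\<bar>rho\<bar> \<le> 1"
  shows "var_th_given_x rho sd_th \<ge> 0"
proof -
  have "rho^2 \<le> 1"
    using assms by (metis abs_le_square_iff abs_one one_power2)
  then show ?thesis
    unfolding var_th_given_x_def by simp
qed

lemma resid1_var_lin_x:
  assumes "sd_x \<noteq> 0"
  shows "resid1 (var_lin bth bx rho sd_th sd_x nv) (cov_lin_x bth bx rho sd_th sd_x) (var_x sd_x)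
    = bth^2 * var_th_given_x rho sd_th + nv"
  using assms
  unfolding resid1_def var_lin_def cov_lin_x_def var_x_def var_th_def cov_thx_def
    var_th_given_x_def
  by (simp add: field_simps power2_eq_square)

lemma partial_cov_lin_lin_x:
  assumes "sd_x \<noteq> 0"
  shows "cov_lin_lin a1 a2 b1 b2 rho sd_th sd_x
      - cov_lin_x a1 a2 rho sd_th sd_x * cov_lin_x b1 b2 rho sd_th sd_x / var_x sd_x
    = a1 * b1 * var_th_given_x rho sd_th"
  using assms
  unfolding cov_lin_lin_def cov_lin_x_def var_x_def var_th_def cov_thx_def var_th_given_x_def
  by (simp add: field_simps power2_eq_square)

theorem lemma3p3:
  fixes n1 :: nat and bth0 bth1 bx0 bx1 rho sd_th sd_x s2E :: real
  assumes "n1 \<ge> 1"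
    and "sd_th > 0" and "sd_x > 0" and "s2E > 0"
    and "\<bar>rho\<bar> \<le> 1"
  shows "var_DiD_X n1 bth0 bth1 bx0 bx1 rho sd_th sd_x s2E
           \<ge> var_DiD_XY0 n1 bth0 bth1 bx0 bx1 rho sd_th sd_x s2E"
proof -
  define su where "su = var_th_given_x rho sd_th"
  have "su \<ge> 0"
    unfolding su_def using assms(5) by (rule var_th_given_x_nonneg)
  then have pos0: "bth0^2 * su + s2E > 0"
    using assms(4) by (simp add: add_nonneg_pos)
  have sx: "sd_x \<noteq> 0" "var_x sd_x \<noteq> 0"
    using assms(3) by (auto simp: var_x_def)
  have "var_DiD_XY0 n1 bth0 bth1 bx0 bx1 rho sd_th sd_x s2E
      = fo_var n1 (resid1 (bth1^2 * su + s2E) (bth1 * bth0 * su) (bth0^2 * su + s2E))"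
    unfolding var_DiD_XY0_def
    using sx pos0
    by (simp add: resid2_as_iterated_resid1 resid1_var_lin_x partial_cov_lin_lin_x su_def)
  also have "\<dots> \<le> fo_var n1 ((bth1^2 * su + s2E) - 2 * 1 * (bth1 * bth0 * su)
                                + 1^2 * (bth0^2 * su + s2E))"
    unfolding fo_var_def
    by (intro divide_right_mono mult_left_mono resid1_le_quadratic pos0) simp_all
  also have "\<dots> = var_DiD_X n1 bth0 bth1 bx0 bx1 rho sd_th sd_x s2E"
    unfolding var_DiD_X_def resid1_var_lin_x[OF sx(1)] su_def
    by (simp add: algebra_simps power2_eq_square)
  finally show ?thesis .
qed

end
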